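(* Every completely dependent three-dimensional copula is generalized simplified.
   Context: $\mathbb{I}=[0,1]$, $\lambda$ Lebesgue measure; points of $\mathbb{I}^3$ are written $(\mathbf{u},v)$ with $\mathbf{u}=(u_1,u_2)\in\mathbb{I}^2$. For a three-dimensional copula $C$, its Markov kernel $K_C:\mathbb{I}\times\mathcal{B}(\mathbb{I}^2)\to\mathbb{I}$ is (a version of) the regular conditional distribution of $(U_1,U_2)$ given $U_3=v$, $(U_1,U_2,U_3)\sim C$, so $C(\mathbf{u},v)=\int_{[0,v]}K_C(t,[\mathbf{0},\mathbf{u}])\,d\lambda(t)$. The conditional univariate distribution functions are $F_{1|3}(u_1|t)=K_C(t,[0,u_1]\times\mathbb{I})$ and $F_{2|3}(u_2|t)=K_C(t,\mathbb{I}\times[0,u_2])$. A copula $C$ is completely dependent (w.r.t. the last coordinate) if there exist $\lambda$-preserving maps $h_1,h_2:\mathbb{I}\to\mathbb{I}$ (i.e. $\lambda(h_i^{-1}(F))=\lambda(F)$ for all Borel $F$) such that $K(v,E)=\mathbf{1}_E(h_1(v),h_2(v))$ is a Markov kernel of $C$. A three-dimensional copula $C$ is generalized simplified if there exists a bivariate copula $A$ with $C(\mathbf{u},v)=\int_{[0,v]}A(F_{1|3}(u_1|t),F_{2|3}(u_2|t))\,d\lambda(t)$ for all $(\mathbf{u},v)\in\mathbb{I}^2\times\mathbb{I}$. *)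

theory Defs
  imports "HOL-Probability.Probability"
begin

abbreviation unitI :: "real set" where "unitI \<equiv> {0..1}"

definition lebI :: "real measure" where
  "lebI = restrict_space lborel {0..1}"

definition borelI2 :: "(real \<times> real) measure" where
  "borelI2 = restrict_space borel ({0..1} \<times> {0..1})"

definition copula2 :: "(real \<Rightarrow> real \<Rightarrow> real) \<Rightarrow> bool" where
  "copula2 A \<longleftrightarrow>
     (\<forall>u\<in>unitI. A u 0 = 0 \<and> A 0 u = 0 \<and> A u 1 = u \<and> A 1 u = u) \<and>
     (\<forall>a1\<in>unitI. \<forall>b1\<in>unitI. \<forall>a2\<in>unitI. \<forall>b2\<in>unitI. a1 \<le> b1 \<longrightarrow> a2 \<le> b2 \<longrightarrow>
        A b1 b2 - A a1 b2 - A b1 a2 + A a1 a2 \<ge> 0)"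

definition copula3 :: "(real \<Rightarrow> real \<Rightarrow> real \<Rightarrow> real) \<Rightarrow> bool" where
  "copula3 C \<longleftrightarrow>
     (\<forall>x\<in>unitI. \<forall>y\<in>unitI. C 0 x y = 0 \<and> C x 0 y = 0 \<and> C x y 0 = 0) \<and>
     (\<forall>u\<in>unitI. C u 1 1 = u \<and> C 1 u 1 = u \<and> C 1 1 u = u) \<and>
     (\<forall>a1\<in>unitI. \<forall>b1\<in>unitI. \<forall>a2\<in>unitI. \<forall>b2\<in>unitI. \<forall>a3\<in>unitI. \<forall>b3\<in>unitI.
        a1 \<le> b1 \<longrightarrow> a2 \<le> b2 \<longrightarrow> a3 \<le> b3 \<longrightarrow>
        C b1 b2 b3 - C a1 b2 b3 - C b1 a2 b3 - C b1 b2 a3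
        + C a1 a2 b3 + C a1 b2 a3 + C b1 a2 a3 - C a1 a2 a3 \<ge> 0)"

text \<open>K is (a version of) the Markov kernel of C w.r.t. the last coordinate:
  t \<mapsto> K t is a measurable map from [0,1] into probability measures on the
  Borel sets of the unit square, and C(u,v) = \<integral>_[0,v] K(t,[0,u]) d\<lambda>(t).\<close>
definition markov_kernel_of ::
  "(real \<Rightarrow> real \<Rightarrow> real \<Rightarrow> real) \<Rightarrow> (real \<Rightarrow> (real \<times> real) measure) \<Rightarrow> bool" where
  "markov_kernel_of C K \<longleftrightarrow>
     K \<in> measurable lebI (prob_algebra borelI2) \<and>
     (\<forall>u1\<in>unitI. \<forall>u2\<in>unitI. \<forall>v\<in>unitI.
        C u1 u2 v = (LINT t:{0..v}|lborel. measure (K t) ({0..u1} \<times> {0..u2})))"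

definition F13 :: "(real \<Rightarrow> (real \<times> real) measure) \<Rightarrow> real \<Rightarrow> real \<Rightarrow> real" where
  "F13 K u1 t = measure (K t) ({0..u1} \<times> {0..1})"

definition F23 :: "(real \<Rightarrow> (real \<times> real) measure) \<Rightarrow> real \<Rightarrow> real \<Rightarrow> real" where
  "F23 K u2 t = measure (K t) ({0..1} \<times> {0..u2})"

definition lambda_preserving :: "(real \<Rightarrow> real) \<Rightarrow> bool" where
  "lambda_preserving h \<longleftrightarrow> h \<in> measurable lebI lebI \<and> distr lebI lebI h = lebI"

definition completely_dependent :: "(real \<Rightarrow> real \<Rightarrow> real \<Rightarrow> real) \<Rightarrow> bool" where
  "completely_dependent C \<longleftrightarrow>
     (\<exists>h1 h2. lambda_preserving h1 \<and> lambda_preserving h2 \<and>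
        markov_kernel_of C (\<lambda>v. return borelI2 (h1 v, h2 v)))"

text \<open>Generalized simplified, relative to the chosen version K of the Markov kernel of C.\<close>
definition generalized_simplified ::
  "(real \<Rightarrow> real \<Rightarrow> real \<Rightarrow> real) \<Rightarrow> (real \<Rightarrow> (real \<times> real) measure) \<Rightarrow> bool" where
  "generalized_simplified C K \<longleftrightarrow>
     (\<exists>A. copula2 A \<and>
        (\<forall>u1\<in>unitI. \<forall>u2\<in>unitI. \<forall>v\<in>unitI.
           C u1 u2 v = (LINT t:{0..v}|lborel. A (F13 K u1 t) (F23 K u2 t))))"

end

theory Submission
  imports Defs
begin

(* For a completely dependent copula one version of the Markov kernel is the point mass at
   (h1 t, h2 t), whose box probabilities factorise:
   1{h1 t \<le> u1} 1{h2 t \<le> u2} = F13(u1|t) F23(u2|t).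
   Any other version K agrees with it almost everywhere on every box, since nonnegative integrable
   functions on [0,1] with the same integrals over all [0,v] coincide a.e. (the measures they are
   densities of have the same distribution function).  So the product copula is a witness; as the conditional
   distribution functions are {0,1}-valued, any copula would do. *)

lemma AE_eq_if_integrals_atMost_eq:
  fixes f g :: "real \<Rightarrow> real"
  assumes f: "integrable lborel f" "\<And>t. 0 \<le> f t"
    and g: "integrable lborel g" "\<And>t. 0 \<le> g t"
    and eq: "\<And>x. (LINT t:{..x}|lborel. f t) = (LINT t:{..x}|lborel. g t)"
  shows "AE t in lborel. f t = g t"
proof -
  let ?Mf = "density lborel (\<lambda>t. ennreal (f t))" and ?Mg = "density lborel (\<lambda>t. ennreal (g t))"
  have emf: "emeasure ?Mf A = ennreal (LINT t:A|lborel. f t)" if "A \<in> sets borel" for A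
    using f that by (simp add: emeasure_density nn_set_integral_eq_set_integral)
  have emg: "emeasure ?Mg A = ennreal (LINT t:A|lborel. g t)" if "A \<in> sets borel" for A
    using g that by (simp add: emeasure_density nn_set_integral_eq_set_integral)
  have "finite_borel_measure ?Mf" "finite_borel_measure ?Mg"
    unfolding finite_borel_measure_def finite_borel_measure_axioms_def
    using emf[of UNIV] emg[of UNIV] by (auto intro!: finite_measureI)
  moreover have "cdf ?Mf = cdf ?Mg"
    using emf emg eq by (simp add: cdf_def measure_def)
  ultimately have "?Mf = ?Mg"
    by (rule cdf_unique')
  then have "AE t in lborel. ennreal (f t) = ennreal (g t)"
    using f g by (intro sigma_finite_measure.density_unique[OF sigma_finite_lborel]) auto
  then show ?thesis
    by eventually_elim (simp add: f(2) g(2))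
qed

lemma prob_space_lebI: "prob_space lebI"
  unfolding lebI_def by (rule prob_space_restrict_space) auto

lemma set_integral_lborel_eq_lebI:
  fixes f :: "real \<Rightarrow> real"
  assumes "S \<subseteq> unitI"
  shows "(LINT t:S|lborel. f t) = (LINT t:S|lebI. f t)"
proof -
  have "(LINT t:S|lebI. f t) = (LINT t:S|lborel. indicator unitI t * f t)"
    unfolding lebI_def by (subst set_integral_restrict_space) auto
  also have "\<dots> = (LINT t:S|lborel. f t)"
    unfolding set_lebesgue_integral_def
    using assms by (intro Bochner_Integration.integral_cong) (auto simp: indicator_def)
  finally show ?thesis ..
qed

lemma set_integral_lborel_cong_AE_lebI:
  fixes f g :: "real \<Rightarrow> real"
  assumes "f \<in> borel_measurable lebI" "g \<in> borel_measurable lebI" "AE t in lebI. f t = g t"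
    and S: "S \<in> sets borel" "S \<subseteq> unitI"
  shows "(LINT t:S|lborel. f t) = (LINT t:S|lborel. g t)"
proof -
  have "S \<in> sets lebI"
    using S by (auto simp: lebI_def sets_restrict_space_iff)
  then have "(LINT t:S|lebI. f t) = (LINT t:S|lebI. g t)"
    using assms by (intro set_lebesgue_integral_cong_AE) (auto elim: AE_mp)
  then show ?thesis
    using S by (simp add: set_integral_lborel_eq_lebI)
qed

lemma AE_lebI_eq_if_set_integrals_Icc_eq:
  fixes f g :: "real \<Rightarrow> real"
  assumes f: "integrable lebI f" "\<And>t. t \<in> unitI \<Longrightarrow> 0 \<le> f t"
    and g: "integrable lebI g" "\<And>t. t \<in> unitI \<Longrightarrow> 0 \<le> g t"
    and eq: "\<And>v. v \<in> unitI \<Longrightarrow> (LINT t:{0..v}|lborel. f t) = (LINT t:{0..v}|lborel. g t)"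
  shows "AE t in lebI. f t = g t"
proof -
  define F where "F t = indicator unitI t * f t" for t
  define G where "G t = indicator unitI t * g t" for t
  have integrable: "integrable lborel F" "integrable lborel G"
    using f(1) g(1) by (simp_all add: F_def[abs_def] G_def[abs_def] lebI_def integrable_restrict_space)
  have nonneg: "0 \<le> F t" "0 \<le> G t" for t
    using f(2) g(2) by (simp_all add: F_def G_def indicator_def)
  have "(LINT t:{..x}|lborel. F t) = (LINT t:{..x}|lborel. G t)" for x
  proof -
    have restrict: "(LINT t:{..x}|lborel. indicator unitI t * h t) = (LINT t:{0..min x 1}|lborel. h t)"
      for h :: "real \<Rightarrow> real"
      unfolding set_lebesgue_integral_def
      by (intro Bochner_Integration.integral_cong) (auto simp: indicator_def)
    show ?thesis
    proof (cases "x < 0")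
      case True
      then show ?thesis by (simp add: F_def G_def restrict) (simp add: set_lebesgue_integral_def)
    next
      case False
      then show ?thesis by (simp add: F_def G_def restrict eq)
    qed
  qed
  then have "AE t in lborel. F t = G t"
    by (intro AE_eq_if_integrals_atMost_eq integrable nonneg)
  then show ?thesis
    unfolding lebI_def by (subst AE_restrict_space_iff) (auto simp: F_def G_def elim: AE_mp)
qed

lemma box_in_sets_borelI2:
  assumes "a \<in> unitI" "b \<in> unitI"
  shows "{0..a} \<times> {0..b} \<in> sets borelI2"
  unfolding borelI2_def using assms
  by (subst sets_restrict_space_iff) (auto intro!: borel_closed closed_Times)

lemma markov_kernel_of_prob_space:
  assumes "markov_kernel_of C K" "t \<in> unitI"
  shows "prob_space (K t)"
proof -
  have "K \<in> measurable lebI (prob_algebra borelI2)" "t \<in> space lebI"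
    using assms by (auto simp: markov_kernel_of_def lebI_def)
  then have "K t \<in> space (prob_algebra borelI2)"
    by (rule measurable_space)
  then show ?thesis
    by (simp add: space_prob_algebra)
qed

lemma markov_kernel_of_box_measurable:
  assumes "markov_kernel_of C K" "a \<in> unitI" "b \<in> unitI"
  shows "(\<lambda>t. measure (K t) ({0..a} \<times> {0..b})) \<in> borel_measurable lebI"
  using assms(1) unfolding markov_kernel_of_def
  by (auto intro!: measurable_compose[OF _ measurable_measure_prob_algebra[OF box_in_sets_borelI2[OF assms(2,3)]]])

lemma markov_kernel_of_box_AE_unique:
  assumes K1: "markov_kernel_of C K1" and K2: "markov_kernel_of C K2"
    and ab: "a \<in> unitI" "b \<in> unitI"
  shows "AE t in lebI. measure (K1 t) ({0..a} \<times> {0..b}) = measure (K2 t) ({0..a} \<times> {0..b})"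
proof -
  interpret lebI: prob_space lebI by (rule prob_space_lebI)
  have "integrable lebI (\<lambda>t. measure (K t) ({0..a} \<times> {0..b}))" if "markov_kernel_of C K" for K
  proof (rule lebI.integrable_const_bound[where B=1])
    show "AE t in lebI. norm (measure (K t) ({0..a} \<times> {0..b})) \<le> 1"
      using prob_space.prob_le_1[OF markov_kernel_of_prob_space[OF that]]
      by (intro AE_I2) (simp add: lebI_def)
  qed (rule markov_kernel_of_box_measurable[OF that ab])
  then show ?thesis
    using K1 K2 ab unfolding markov_kernel_of_def
    by (intro AE_lebI_eq_if_set_integrals_Icc_eq) auto
qed

lemma measure_return_box:
  assumes "a \<in> unitI" "b \<in> unitI"
  shows "measure (return borelI2 (x, y)) ({0..a} \<times> {0..b}) = indicator {0..a} x * indicator {0..b} y"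
  by (simp add: measure_return[OF box_in_sets_borelI2[OF assms]] indicator_times)

lemma point_mass_box_eq_F13_F23:
  assumes "K t = return borelI2 (x, y)" "x \<in> unitI" "y \<in> unitI" "a \<in> unitI" "b \<in> unitI"
  shows "measure (K t) ({0..a} \<times> {0..b}) = F13 K a t * F23 K b t"
  using assms by (simp add: F13_def F23_def measure_return_box indicator_def)

lemma completely_dependent_box_AE_eq_F13_F23:
  assumes "completely_dependent C" "markov_kernel_of C K" "a \<in> unitI" "b \<in> unitI"
  shows "AE t in lebI. measure (K t) ({0..a} \<times> {0..b}) = F13 K a t * F23 K b t"
proof -
  obtain h1 h2 where h: "lambda_preserving h1" "lambda_preserving h2"
    and K0: "markov_kernel_of C (\<lambda>t. return borelI2 (h1 t, h2 t))" (is "markov_kernel_of C ?K0")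
    using assms(1) unfolding completely_dependent_def by blast
  have h_unitI: "h1 t \<in> unitI" "h2 t \<in> unitI" if "t \<in> unitI" for t
    using h measurable_space[of _ lebI lebI t] that unfolding lambda_preserving_def
    by (auto simp: lebI_def)
  have unitI: "AE t in lebI. t \<in> unitI"
    by (rule AE_I2) (simp add: lebI_def)
  have one: "(1::real) \<in> unitI" by simp
  note agree = markov_kernel_of_box_AE_unique[OF assms(2) K0]
  show ?thesis
    using agree[OF assms(3,4)] agree[OF assms(3) one] agree[OF one assms(4)] unitI
  proof eventually_elim
    case (elim t)
    then show ?case
      using point_mass_box_eq_F13_F23[of ?K0 t, OF refl h_unitI assms(3,4)]
      by (simp add: F13_def F23_def)
  qed
qed

lemma copula2_product: "copula2 (\<lambda>x y. x * y)"
  unfolding copula2_def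
proof (intro conjI ballI impI)
  fix a1 b1 a2 b2 :: real
  assume "a1 \<le> b1" "a2 \<le> b2"
  then have "0 \<le> (b1 - a1) * (b2 - a2)" by simp
  then show "0 \<le> b1 * b2 - a1 * b2 - b1 * a2 + a1 * a2" by (simp add: algebra_simps)
qed auto

theorem theorem3p2:
  fixes C :: "real \<Rightarrow> real \<Rightarrow> real \<Rightarrow> real"
    and K :: "real \<Rightarrow> (real \<times> real) measure"
  assumes "copula3 C"
    and "completely_dependent C"
    and "markov_kernel_of C K"
  shows "generalized_simplified C K"
  unfolding generalized_simplified_def
proof (intro exI conjI ballI)
  show "copula2 (\<lambda>x y. x * y)" by (rule copula2_product)
  fix u1 u2 v :: real
  assume u: "u1 \<in> unitI" "u2 \<in> unitI" and v: "v \<in> unitI"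
  have box_measurable: "(\<lambda>t. measure (K t) ({0..a} \<times> {0..b})) \<in> borel_measurable lebI"
    if "a \<in> unitI" "b \<in> unitI" for a b
    using markov_kernel_of_box_measurable[OF assms(3) that] .
  have "C u1 u2 v = (LINT t:{0..v}|lborel. measure (K t) ({0..u1} \<times> {0..u2}))"
    using assms(3) u v by (simp add: markov_kernel_of_def)
  also have "\<dots> = (LINT t:{0..v}|lborel. F13 K u1 t * F23 K u2 t)"
    using completely_dependent_box_AE_eq_F13_F23[OF assms(2,3) u] v
    by (intro set_integral_lborel_cong_AE_lebI)
      (auto simp: F13_def F23_def intro!: borel_measurable_times box_measurable u)
  finally show "C u1 u2 v = (LINT t:{0..v}|lborel. F13 K u1 t * F23 K u2 t)" .
qed

end
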